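(* Let $\mathcal{H}$ be a Hilbert space, let $W=(W(h))_{h\in\mathcal{H}}$ be an isonormal Gaussian process on $\mathcal{H}$, and let $\mathcal{F}\subset\mathcal{H}$. Then for all $\delta\geq 0$, \[ \omega(\mathrm{conv}(\mathcal{F}),\delta)\leq \inf_{\varepsilon>0}\left(2\,\omega(\mathcal{F},\varepsilon)+\delta\sqrt{N(\mathcal{F},\varepsilon)}\right), \] where $\mathrm{conv}(\mathcal{F})$ denotes the convex hull of $\mathcal{F}$.
   Context: An isonormal Gaussian process on $\mathcal{H}$ is a family $(W(h))_{h\in\mathcal{H}}$ of centered jointly Gaussian random variables with $\mathbb{E}[W(h)W(h')]=\langle h,h'\rangle_{\mathcal{H}}$ for all $h,h'\in\mathcal{H}$. For $A\subset\mathcal{H}$ and $\delta\geq0$, the modulus of continuity is $\omega(A,\delta)=\mathbb{E}\Big[\sup_{f,g\in A,\ \|f-g\|\leq\delta}|W(f)-W(g)|\Big]$. For $\varepsilon>0$, $N(A,\varepsilon)$ is the $\varepsilon$-covering number of $A$: the minimal cardinality of a subset $A_\varepsilon\subset A$ such that $A$ is contained in the union of the closed balls of radius $\varepsilon$ centered at points of $A_\varepsilon$. *)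

theory Defs
  imports "HOL-Probability.Probability"
begin

definition centered_gaussian :: "'a measure \<Rightarrow> ('a \<Rightarrow> real) \<Rightarrow> bool" where
  "centered_gaussian M X \<longleftrightarrow> X \<in> borel_measurable M \<and>
     ((AE x in M. X x = 0) \<or> (\<exists>\<sigma>>0. distributed M lborel X (normal_density 0 \<sigma>)))"

text \<open>Isonormal Gaussian process: centered, jointly Gaussian (every finite linear
  combination is a centered Gaussian), with covariance given by the inner product.\<close>
definition isonormal :: "'a measure \<Rightarrow> ('h::real_inner \<Rightarrow> 'a \<Rightarrow> real) \<Rightarrow> bool" where
  "isonormal M W \<longleftrightarrow>
     (\<forall>(n::nat) (h::nat \<Rightarrow> 'h) (c::nat \<Rightarrow> real).
        centered_gaussian M (\<lambda>x. \<Sum>i<n. c i * W (h i) x)) \<and>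
     (\<forall>h h'. integral\<^sup>L M (\<lambda>x. W h x * W h' x) = inner h h')"

text \<open>Modulus of continuity. The expectation of the supremum of the (possibly
  uncountable) family is taken in the standard lattice sense:
  E sup_{t in T} X_t := sup over finite S of E max_{t in S} X_t.\<close>
definition modulus :: "'a measure \<Rightarrow> ('h::real_normed_vector \<Rightarrow> 'a \<Rightarrow> real) \<Rightarrow> 'h set \<Rightarrow> real \<Rightarrow> ennreal" where
  "modulus M W A \<delta> =
     (SUP S \<in> {S. finite S \<and> S \<subseteq> {(f, g). f \<in> A \<and> g \<in> A \<and> norm (f - g) \<le> \<delta>}}.
        \<integral>\<^sup>+ x. (SUP p \<in> S. ennreal \<bar>W (fst p) x - W (snd p) x\<bar>) \<partial>M)"

text \<open>Covering number (centers in A, closed balls); \<infinity> if no finite cover exists.\<close>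
definition covering_number :: "'h::metric_space set \<Rightarrow> real \<Rightarrow> ennreal" where
  "covering_number A \<epsilon> =
     (INF C \<in> {C. finite C \<and> C \<subseteq> A \<and> A \<subseteq> (\<Union>c\<in>C. cball c \<epsilon>)}. of_nat (card C))"

definition ennsqrt :: "ennreal \<Rightarrow> ennreal" where
  "ennsqrt x = (if x = \<infinity> then \<infinity> else ennreal (sqrt (enn2real x)))"

end

theory Submission
  imports Defs
begin

text \<open>
  Fix \<open>\<epsilon>\<close>, an \<open>\<epsilon>\<close>-net \<open>C \<subseteq> F\<close> with centre map \<open>\<pi>\<close>, an orthonormal
  set \<open>E\<close> spanning \<open>C\<close> with \<open>|E| \<le> |C|\<close>, and the projection \<open>P\<close> onto
  \<open>span E\<close>. For \<open>f, g\<close> in the convex hull of a finite \<open>F0 \<subseteq> F\<close>,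
  \<open>W f - W g = W (f - P f) - W (g - P g) + W (P (f - g))\<close> almost surely. The first two terms
  are convex combinations of the \<open>W (z - P z)\<close>, \<open>z \<in> F0\<close>; the last is at most
  \<open>\<parallel>f - g\<parallel> sqrt (\<Sum>e\<in>E. (W e)\<^sup>2)\<close> by Cauchy-Schwarz and Bessel, and has expectation
  at most \<open>\<delta> \<surd>|C|\<close>. Finally \<open>z - P z\<close> is orthogonal to \<open>P z - \<pi> z\<close>, and projecting
  off an orthogonal component does not increase the expected maximum of a Gaussian family
  (by symmetry: \<open>a + b\<close> and \<open>a - b\<close> have the same joint law, and \<open>W a\<close> is their
  average), so \<open>E max |W (z - P z)| \<le> E max |W (z - \<pi> z)| \<le> \<omega>(F, \<epsilon>)\<close>.

  The equality of joint laws is reduced to one-dimensional Levy inversion, one coordinate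
  at a time: characteristic functions weighted by the indicators of the coordinates already
  treated stay equal.
\<close>

lemma (in prob_space) integrable_bounded_weight_iexp:
  fixes w \<phi> :: "'a \<Rightarrow> real"
  assumes [measurable]: "w \<in> borel_measurable M" "\<phi> \<in> borel_measurable M"
    and "\<And>x. \<bar>w x\<bar> \<le> B"
  shows "integrable M (\<lambda>x. of_real (w x) * iexp (\<phi> x))"
  using assms(3) by (intro integrable_const_bound[where B=B]) (auto simp: norm_mult)

lemma (in prob_space) weighted_law:
  fixes w Y :: "'a \<Rightarrow> real"
  assumes [measurable]: "w \<in> borel_measurable M" "Y \<in> borel_measurable M"
    and w_bounds: "\<And>x. 0 \<le> w x \<and> w x \<le> B"
    and mass: "(LINT x|M. w x) = c" "c > 0"
  defines "N \<equiv> distr (density M (\<lambda>x. ennreal (w x / c))) lborel Y"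
  shows "real_distribution N"
    and "char N s = (CLINT x|M. of_real (w x) * iexp (s * Y x)) / c"
    and "A \<in> sets borel \<Longrightarrow> (LINT x|M. w x * indicator A (Y x)) = c * measure N A"
proof -
  have w_integrable: "integrable M w"
    using w_bounds by (intro integrable_const_bound[where B=B]) auto
  have density_nonneg: "0 \<le> w x / c" for x
    using w_bounds \<open>c > 0\<close> by simp
  have "emeasure N UNIV = (\<integral>\<^sup>+x. ennreal (w x / c) \<partial>M)"
    unfolding N_def by (simp add: emeasure_distr emeasure_density)
  also have "\<dots> = ennreal (LINT x|M. w x / c)"
    using w_integrable density_nonneg by (intro nn_integral_eq_integral) auto
  also have "\<dots> = 1"
    using mass by simp
  finally show "real_distribution N"
    unfolding real_distribution_def real_distribution_axioms_def
    by (auto intro!: prob_spaceI simp: N_def)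
  have "char N s = (CLINT x|M. (w x / c) *\<^sub>R iexp (s * Y x))"
    unfolding char_def N_def using density_nonneg
    by (simp add: integral_distr integral_density)
  also have "\<dots> = (CLINT x|M. of_real (w x) * iexp (s * Y x)) / c"
    by (simp add: scaleR_conv_of_real)
  finally show "char N s = (CLINT x|M. of_real (w x) * iexp (s * Y x)) / c" .
  assume [measurable]: "A \<in> sets borel"
  have "measure N A = (LINT y|N. indicator A y)"
    by (simp add: N_def)
  also have "\<dots> = (LINT x|density M (\<lambda>x. ennreal (w x / c)). indicator A (Y x))"
    unfolding N_def by (subst integral_distr) auto
  also have "\<dots> = (LINT x|M. w x * indicator A (Y x)) / c"
    using density_nonneg by (simp add: integral_density)
  finally show "(LINT x|M. w x * indicator A (Y x)) = c * measure N A"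
    using \<open>c > 0\<close> by simp
qed

lemma (in prob_space) weighted_Levy_uniqueness:
  fixes w w' Y Y' :: "'a \<Rightarrow> real"
  assumes meas[measurable]: "w \<in> borel_measurable M" "w' \<in> borel_measurable M"
      "Y \<in> borel_measurable M" "Y' \<in> borel_measurable M"
    and w_bounds: "\<And>x. 0 \<le> w x \<and> w x \<le> B" "\<And>x. 0 \<le> w' x \<and> w' x \<le> B"
    and char_eq: "\<And>s. (CLINT x|M. of_real (w x) * iexp (s * Y x))
                     = (CLINT x|M. of_real (w' x) * iexp (s * Y' x))"
    and A: "A \<in> sets borel"
  shows "(LINT x|M. w x * indicator A (Y x)) = (LINT x|M. w' x * indicator A (Y' x))"
proof -
  define c where "c = (LINT x|M. w x)"
  have mass': "(LINT x|M. w' x) = c"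
    using char_eq[of 0] by (simp add: c_def)
  have w_integrable: "integrable M w" "integrable M w'"
    using w_bounds by (auto intro!: integrable_const_bound[where B=B])
  have "c \<ge> 0"
    using w_bounds by (simp add: c_def integral_nonneg_AE)
  then consider "c = 0" | "c > 0"
    by linarith
  then show ?thesis
  proof cases
    case 1
    have "AE x in M. w x = 0"
      using w_integrable w_bounds 1 by (simp add: c_def integral_nonneg_eq_0_iff_AE)
    then have "(LINT x|M. w x * indicator A (Y x)) = 0"
      by (intro integral_eq_zero_AE) auto
    moreover have "AE x in M. w' x = 0"
      using w_integrable w_bounds mass' 1 by (simp add: integral_nonneg_eq_0_iff_AE)
    then have "(LINT x|M. w' x * indicator A (Y' x)) = 0"
      by (intro integral_eq_zero_AE) auto
    ultimately show ?thesis
      by simp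
  next
    case 2
    note law = weighted_law[OF meas(1,3) w_bounds(1) c_def[symmetric] 2]
      and law' = weighted_law[OF meas(2,4) w_bounds(2) mass' 2]
    have "distr (density M (\<lambda>x. ennreal (w x / c))) lborel Y
        = distr (density M (\<lambda>x. ennreal (w' x / c))) lborel Y'"
      by (rule Levy_uniqueness[OF law(1) law'(1)]) (rule ext, simp only: law(2) law'(2) char_eq)
    then show ?thesis
      using law(3)[OF A] law'(3)[OF A] by simp
  qed
qed

lemma (in prob_space) integral_iexp_shifted_cos_sin_weight:
  fixes w \<theta> \<phi> :: "'a \<Rightarrow> real"
  assumes [measurable]: "w \<in> borel_measurable M" "\<theta> \<in> borel_measurable M" "\<phi> \<in> borel_measurable M"
    and w_bound: "\<And>x. \<bar>w x\<bar> \<le> B"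
  shows "(CLINT x|M. of_real (w x * (1 + cos (\<theta> x))) * iexp (\<phi> x))
       = (CLINT x|M. of_real (w x) * iexp (\<phi> x))
         + ((CLINT x|M. of_real (w x) * iexp (\<phi> x + \<theta> x))
            + (CLINT x|M. of_real (w x) * iexp (\<phi> x - \<theta> x))) / 2"
    and "(CLINT x|M. of_real (w x * (1 + sin (\<theta> x))) * iexp (\<phi> x))
       = (CLINT x|M. of_real (w x) * iexp (\<phi> x))
         + \<i> * ((CLINT x|M. of_real (w x) * iexp (\<phi> x - \<theta> x))
            - (CLINT x|M. of_real (w x) * iexp (\<phi> x + \<theta> x))) / 2"
proof -
  have integrable: "integrable M (\<lambda>x. of_real (w x) * iexp (\<psi> x))"
    if [measurable]: "\<psi> \<in> borel_measurable M" for \<psi>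
    by (rule integrable_bounded_weight_iexp[OF _ _ w_bound]) auto
  have "of_real (w x * (1 + cos (\<theta> x))) * iexp (\<phi> x)
      = of_real (w x) * iexp (\<phi> x)
        + (of_real (w x) * iexp (\<phi> x + \<theta> x) + of_real (w x) * iexp (\<phi> x - \<theta> x)) / 2" for x
    by (simp only: cis_conv_exp[symmetric])
      (simp add: complex_eq_iff cos_add cos_diff sin_add sin_diff algebra_simps)
  then show "(CLINT x|M. of_real (w x * (1 + cos (\<theta> x))) * iexp (\<phi> x))
       = (CLINT x|M. of_real (w x) * iexp (\<phi> x))
         + ((CLINT x|M. of_real (w x) * iexp (\<phi> x + \<theta> x))
            + (CLINT x|M. of_real (w x) * iexp (\<phi> x - \<theta> x))) / 2"
    using integrable[of \<phi>] integrable[of "\<lambda>x. \<phi> x + \<theta> x"] integrable[of "\<lambda>x. \<phi> x - \<theta> x"]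
    by (simp add: integral_add integral_diff)
  have "of_real (w x * (1 + sin (\<theta> x))) * iexp (\<phi> x)
      = of_real (w x) * iexp (\<phi> x)
        + \<i> * (of_real (w x) * iexp (\<phi> x - \<theta> x) - of_real (w x) * iexp (\<phi> x + \<theta> x)) / 2" for x
    by (simp only: cis_conv_exp[symmetric])
      (simp add: complex_eq_iff cos_add cos_diff sin_add sin_diff algebra_simps)
  then show "(CLINT x|M. of_real (w x * (1 + sin (\<theta> x))) * iexp (\<phi> x))
       = (CLINT x|M. of_real (w x) * iexp (\<phi> x))
         + \<i> * ((CLINT x|M. of_real (w x) * iexp (\<phi> x - \<theta> x))
            - (CLINT x|M. of_real (w x) * iexp (\<phi> x + \<theta> x))) / 2"
    using integrable[of \<phi>] integrable[of "\<lambda>x. \<phi> x + \<theta> x"] integrable[of "\<lambda>x. \<phi> x - \<theta> x"]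
    by (simp add: integral_add integral_diff)
qed

text \<open>The weights \<open>1 + cos\<close> and \<open>1 + sin\<close> are nonnegative, as
  \<open>weighted_Levy_uniqueness\<close> requires.\<close>

lemma (in prob_space) integral_iexp_weight_eq_real_integrals:
  fixes w \<theta> :: "'a \<Rightarrow> real"
  assumes [measurable]: "w \<in> borel_measurable M" "\<theta> \<in> borel_measurable M"
    and w_bound: "\<And>x. \<bar>w x\<bar> \<le> B"
  shows "(CLINT x|M. of_real (w x) * iexp (\<theta> x))
       = of_real (LINT x|M. (1 + cos (\<theta> x)) * w x) - of_real (LINT x|M. w x)
         + \<i> * (of_real (LINT x|M. (1 + sin (\<theta> x)) * w x) - of_real (LINT x|M. w x))"
proof -
  have integrable: "integrable M (\<lambda>x. (1 + g (\<theta> x)) * w x)"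
    if [measurable]: "g \<in> borel_measurable borel" and "\<And>y. \<bar>g y\<bar> \<le> 1" for g
  proof (rule integrable_const_bound[where B="2 * B"])
    have "\<bar>1 + g (\<theta> x)\<bar> * \<bar>w x\<bar> \<le> 2 * B" for x
      using that(2)[of "\<theta> x"] w_bound[of x] by (intro mult_mono) (auto simp: abs_le_iff)
    then show "AE x in M. norm ((1 + g (\<theta> x)) * w x) \<le> 2 * B"
      by (simp add: abs_mult)
  qed simp
  define c where "c x = (1 + cos (\<theta> x)) * w x" for x
  define s where "s x = (1 + sin (\<theta> x)) * w x" for x
  have "integrable M w"
    using w_bound by (intro integrable_const_bound[where B=B]) auto
  moreover have "integrable M c" "integrable M s"
    unfolding c_def s_def using integrable[of cos] integrable[of sin] by auto
  moreover have "of_real (w x) * iexp (\<theta> x)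
      = of_real (c x) - of_real (w x) + \<i> * (of_real (s x) - of_real (w x))" for x
    by (simp add: c_def s_def cis_conv_exp[symmetric] complex_eq_iff algebra_simps)
  ultimately show ?thesis
    by (simp add: c_def[symmetric] s_def[symmetric] integral_add integral_diff)
qed

lemma (in prob_space) integral_iexp_indicator_weight_eq:
  fixes I I' Y Y' \<theta> \<theta>' :: "'a \<Rightarrow> real"
  assumes [measurable]: "I \<in> borel_measurable M" "I' \<in> borel_measurable M"
      "Y \<in> borel_measurable M" "Y' \<in> borel_measurable M"
      "\<theta> \<in> borel_measurable M" "\<theta>' \<in> borel_measurable M"
    and I_bounds: "\<And>x. 0 \<le> I x \<and> I x \<le> 1" "\<And>x. 0 \<le> I' x \<and> I' x \<le> 1"
    and phase_eq: "\<And>s c. (CLINT x|M. of_real (I x) * iexp (s * Y x + c * \<theta> x))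
                        = (CLINT x|M. of_real (I' x) * iexp (s * Y' x + c * \<theta>' x))"
    and [measurable]: "A \<in> sets borel"
  shows "(CLINT x|M. of_real (I x * indicator A (Y x)) * iexp (\<theta> x))
       = (CLINT x|M. of_real (I' x * indicator A (Y' x)) * iexp (\<theta>' x))"
proof -
  have weight_eq: "(LINT x|M. g (\<theta> x) * (I x * indicator A (Y x)))
      = (LINT x|M. g (\<theta>' x) * (I' x * indicator A (Y' x)))"
    if [measurable]: "g \<in> borel_measurable borel" and g_bounds: "\<And>y. 0 \<le> g y \<and> g y \<le> 2"
      and g_char: "\<And>s. (CLINT x|M. of_real (I x * g (\<theta> x)) * iexp (s * Y x))
        = (CLINT x|M. of_real (I' x * g (\<theta>' x)) * iexp (s * Y' x))"
    for g
  proof -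
    have "0 \<le> J x * g (\<eta> x) \<and> J x * g (\<eta> x) \<le> 2"
      if "\<And>x. 0 \<le> J x \<and> J x \<le> 1" for J \<eta> :: "'a \<Rightarrow> real" and x
      using that[of x] g_bounds[of "\<eta> x"] mult_mono[of "J x" 1 "g (\<eta> x)" 2] by auto
    then have "(LINT x|M. I x * g (\<theta> x) * indicator A (Y x))
        = (LINT x|M. I' x * g (\<theta>' x) * indicator A (Y' x))"
      using I_bounds by (intro weighted_Levy_uniqueness[where B=2] g_char) auto
    then show ?thesis
      by (simp add: ac_simps)
  qed
  have I_abs_bounds: "\<bar>I x\<bar> \<le> 1" "\<bar>I' x\<bar> \<le> 1" for x
    using I_bounds[of x] by auto
  have shifted_bounds: "0 \<le> 1 + cos y" "1 + cos y \<le> 2" "0 \<le> 1 + sin y" "1 + sin y \<le> 2" for y :: real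
    using cos_ge_minus_one[of y] cos_le_one[of y] sin_ge_minus_one[of y] sin_le_one[of y] by linarith+
  note cos_sin = integral_iexp_shifted_cos_sin_weight[of I \<theta> "\<lambda>x. s * Y x" 1 for s]
    integral_iexp_shifted_cos_sin_weight[of I' \<theta>' "\<lambda>x. s * Y' x" 1 for s]
  have "(LINT x|M. I x * indicator A (Y x)) = (LINT x|M. I' x * indicator A (Y' x))"
    using weight_eq[of "\<lambda>_. 1"] phase_eq[of _ 0] by simp
  moreover have "(LINT x|M. (1 + cos (\<theta> x)) * (I x * indicator A (Y x)))
      = (LINT x|M. (1 + cos (\<theta>' x)) * (I' x * indicator A (Y' x)))"
    using weight_eq[of "\<lambda>y. 1 + cos y"] phase_eq[of _ 0] phase_eq[of _ 1] phase_eq[of _ "-1"] cos_sin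
      I_abs_bounds shifted_bounds by simp
  moreover have "(LINT x|M. (1 + sin (\<theta> x)) * (I x * indicator A (Y x)))
      = (LINT x|M. (1 + sin (\<theta>' x)) * (I' x * indicator A (Y' x)))"
    using weight_eq[of "\<lambda>y. 1 + sin y"] phase_eq[of _ 0] phase_eq[of _ 1] phase_eq[of _ "-1"] cos_sin
      I_abs_bounds shifted_bounds by simp
  moreover have "\<bar>I x * indicator A (Y x)\<bar> \<le> 1" "\<bar>I' x * indicator A (Y' x)\<bar> \<le> 1" for x
    using I_abs_bounds[of x] by (auto simp: indicator_def)
  ultimately show ?thesis
    using integral_iexp_weight_eq_real_integrals[of "\<lambda>x. I x * indicator A (Y x)" \<theta> 1]
      integral_iexp_weight_eq_real_integrals[of "\<lambda>x. I' x * indicator A (Y' x)" \<theta>' 1]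
    by simp
qed

lemma (in prob_space) integral_indicator_prod_eq_if_char_eq:
  fixes Z Z' :: "nat \<Rightarrow> 'a \<Rightarrow> real"
  assumes [measurable]: "\<And>j. Z j \<in> borel_measurable M" "\<And>j. Z' j \<in> borel_measurable M"
    and char_eq: "\<And>t. (CLINT x|M. iexp (\<Sum>j<n. t j * Z j x)) = (CLINT x|M. iexp (\<Sum>j<n. t j * Z' j x))"
    and [measurable]: "\<And>j. A j \<in> sets borel"
  shows "(LINT x|M. (\<Prod>j<n. indicator (A j) (Z j x) :: real))
       = (LINT x|M. (\<Prod>j<n. indicator (A j) (Z' j x)))"
proof -
  \<comment> \<open>The characteristic function of \<open>(V k, \<dots>, V (n - 1))\<close>, weighted by the indicator
    of \<open>V j \<in> B j\<close> for \<open>j < k\<close>; each induction step trades a frequency for an indicator.\<close>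
  define mixed where "mixed V k B t = (CLINT x|M. of_real (\<Prod>j<k. indicator (B j) (V j x) :: real)
      * iexp (\<Sum>j\<in>{k..<n}. t j * V j x))" for V :: "nat \<Rightarrow> 'a \<Rightarrow> real" and k B t
  have "mixed Z k B t = mixed Z' k B t" if "k \<le> n" "\<And>j. B j \<in> sets borel" for k B t
    using that
  proof (induction k arbitrary: B t)
    case 0
    then show ?case
      using char_eq by (simp add: mixed_def atLeast0LessThan)
  next
    case (Suc k)
    note [measurable] = Suc.prems(2)
    have split_sum: "(\<Sum>j\<in>{k..<n}. ((\<lambda>j. c * t j)(k := s)) j * V j x)
        = s * V k x + c * (\<Sum>j\<in>{Suc k..<n}. t j * V j x)" for V :: "nat \<Rightarrow> 'a \<Rightarrow> real" and c s x
      using Suc.prems(1)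
      by (auto simp: sum.atLeast_Suc_lessThan sum_distrib_left mult.assoc intro!: sum.cong)
    have "(CLINT x|M. of_real (\<Prod>j<Suc k. indicator (B j) (Z j x) :: real) * iexp (\<Sum>j\<in>{Suc k..<n}. t j * Z j x))
        = (CLINT x|M. of_real (\<Prod>j<Suc k. indicator (B j) (Z' j x) :: real) * iexp (\<Sum>j\<in>{Suc k..<n}. t j * Z' j x))"
      unfolding prod.lessThan_Suc
    proof (rule integral_iexp_indicator_weight_eq)
      show "(CLINT x|M. of_real (\<Prod>j<k. indicator (B j) (Z j x)) * iexp (s * Z k x + c * (\<Sum>j\<in>{Suc k..<n}. t j * Z j x)))
          = (CLINT x|M. of_real (\<Prod>j<k. indicator (B j) (Z' j x)) * iexp (s * Z' k x + c * (\<Sum>j\<in>{Suc k..<n}. t j * Z' j x)))"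
        for s c
        using Suc.IH[of B "(\<lambda>j. c * t j)(k := s)"] Suc.prems unfolding mixed_def split_sum by simp
    qed (auto intro!: prod_nonneg prod_le_1)
    then show ?case
      by (simp add: mixed_def)
  qed
  from this[of n A "\<lambda>_. 0"] show ?thesis
    by (simp add: mixed_def del: of_real_prod)
qed

lemma (in prob_space) measure_Max_abs_le:
  fixes Z :: "nat \<Rightarrow> 'a \<Rightarrow> real"
  assumes [measurable]: "\<And>j. Z j \<in> borel_measurable M" and "n > 0"
  shows "measure M {x\<in>space M. Max ((\<lambda>j. \<bar>Z j x\<bar>) ` {..<n}) \<le> r}
       = (LINT x|M. (\<Prod>j<n. indicator {-r..r} (Z j x) :: real))"
proof -
  have Max_le: "Max ((\<lambda>j. \<bar>Z j x\<bar>) ` {..<n}) \<le> r \<longleftrightarrow> (\<forall>j<n. \<bar>Z j x\<bar> \<le> r)" for x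
    using \<open>n > 0\<close> by (subst Max_le_iff) auto
  have "(\<Prod>j<n. indicator {-r..r} (Z j x) :: real)
      = indicator {x\<in>space M. Max ((\<lambda>j. \<bar>Z j x\<bar>) ` {..<n}) \<le> r} x" if "x \<in> space M" for x
  proof (cases "\<forall>j<n. \<bar>Z j x\<bar> \<le> r")
    case True
    then show ?thesis
      using that by (auto simp: Max_le indicator_def abs_le_iff intro!: prod.neutral)
  next
    case False
    then obtain j where "j < n" "\<bar>Z j x\<bar> > r"
      by auto
    then show ?thesis
      by (auto simp: Max_le indicator_def abs_le_iff prod_zero_iff intro!: bexI[of _ j])
  qed
  then have "(LINT x|M. (\<Prod>j<n. indicator {-r..r} (Z j x) :: real))
      = (LINT x|M. indicator {x\<in>space M. Max ((\<lambda>j. \<bar>Z j x\<bar>) ` {..<n}) \<le> r} x)"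
    by (intro Bochner_Integration.integral_cong) auto
  then show ?thesis
    by simp
qed

lemma (in prob_space) nn_integral_Max_abs_eq_if_char_eq:
  fixes Z Z' :: "nat \<Rightarrow> 'a \<Rightarrow> real"
  assumes [measurable]: "\<And>j. Z j \<in> borel_measurable M" "\<And>j. Z' j \<in> borel_measurable M"
    and char_eq: "\<And>t. (CLINT x|M. iexp (\<Sum>j<n. t j * Z j x)) = (CLINT x|M. iexp (\<Sum>j<n. t j * Z' j x))"
  shows "(\<integral>\<^sup>+x. ennreal (Max ((\<lambda>j. \<bar>Z j x\<bar>) ` {..<n})) \<partial>M)
       = (\<integral>\<^sup>+x. ennreal (Max ((\<lambda>j. \<bar>Z' j x\<bar>) ` {..<n})) \<partial>M)"
proof (cases "n = 0")
  case False
  have "cdf (distr M borel (\<lambda>x. Max ((\<lambda>j. \<bar>Z j x\<bar>) ` {..<n}))) r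
      = cdf (distr M borel (\<lambda>x. Max ((\<lambda>j. \<bar>Z' j x\<bar>) ` {..<n}))) r" for r
    using False integral_indicator_prod_eq_if_char_eq[OF _ _ char_eq, of "\<lambda>_. {-r..r}"]
    by (simp add: cdf_def measure_distr vimage_def Int_def conj_commute measure_Max_abs_le)
  then have "distr M borel (\<lambda>x. Max ((\<lambda>j. \<bar>Z j x\<bar>) ` {..<n}))
      = distr M borel (\<lambda>x. Max ((\<lambda>j. \<bar>Z' j x\<bar>) ` {..<n}))"
    by (intro cdf_unique ext) auto
  then have "(\<integral>\<^sup>+y. ennreal y \<partial>distr M borel (\<lambda>x. Max ((\<lambda>j. \<bar>Z j x\<bar>) ` {..<n})))
      = (\<integral>\<^sup>+y. ennreal y \<partial>distr M borel (\<lambda>x. Max ((\<lambda>j. \<bar>Z' j x\<bar>) ` {..<n})))"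
    by simp
  then show ?thesis
    by (simp add: nn_integral_distr)
qed simp

lemma norm_sum_scaleR_add_eq_norm_sum_scaleR_diff:
  assumes "finite J" and orth: "\<And>i j. i \<in> J \<Longrightarrow> j \<in> J \<Longrightarrow> orthogonal (a i) (b j)"
  shows "norm (\<Sum>j\<in>J. t j *\<^sub>R (a j + b j)) = norm (\<Sum>j\<in>J. t j *\<^sub>R (a j - b j))"
proof -
  define A where "A = (\<Sum>j\<in>J. t j *\<^sub>R a j)"
  define B where "B = (\<Sum>j\<in>J. t j *\<^sub>R b j)"
  have "orthogonal A B"
    unfolding A_def B_def using \<open>finite J\<close> orth
    by (intro orthogonal_lvsum orthogonal_rvsum) (auto simp: orthogonal_clauses)
  then have "(norm (A + B))\<^sup>2 = (norm (A - B))\<^sup>2"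
    using norm_add_Pythagorean[of A B] norm_add_Pythagorean[of A "- B"] by (simp add: orthogonal_clauses)
  then show ?thesis
    by (simp add: A_def B_def scaleR_add_right scaleR_diff_right sum.distrib sum_subtractf)
qed

definition orthonormal :: "'a::real_inner set \<Rightarrow> bool" where
  "orthonormal E \<longleftrightarrow> pairwise orthogonal E \<and> (\<forall>e\<in>E. norm e = 1)"

lemma orthonormal_inner:
  assumes "orthonormal E" "e \<in> E" "e' \<in> E"
  shows "inner e e' = (if e = e' then 1 else 0)"
  using assms by (auto simp: orthonormal_def pairwise_def orthogonal_def norm_eq_1)

lemma inner_sum_orthonormal:
  assumes "orthonormal E" "finite E" "e \<in> E"
  shows "inner (\<Sum>e'\<in>E. u e' *\<^sub>R e') e = u e"
proof -
  have "inner (\<Sum>e'\<in>E. u e' *\<^sub>R e') e = (\<Sum>e'\<in>E. u e' * inner e' e)"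
    by (simp add: inner_sum_left)
  also have "\<dots> = (\<Sum>e'\<in>E. if e' = e then u e' else 0)"
    using assms by (intro sum.cong refl) (simp add: orthonormal_inner)
  also have "\<dots> = u e"
    using assms by simp
  finally show ?thesis .
qed

definition proj :: "'a::real_inner set \<Rightarrow> 'a \<Rightarrow> 'a" where
  "proj E h = (\<Sum>e\<in>E. inner h e *\<^sub>R e)"

lemma linear_proj: "linear (proj E)"
  by (rule linearI) (simp_all add: proj_def inner_add_left scaleR_add_left sum.distrib scaleR_sum_right)

lemma proj_in_span: "proj E h \<in> span E"
  unfolding proj_def by (intro span_sum span_scale span_base)

lemma inner_proj_orthonormal:
  assumes "orthonormal E" "finite E" "e \<in> E"
  shows "inner (proj E h) e = inner h e"
  unfolding proj_def using inner_sum_orthonormal[OF assms] .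

lemma orthogonal_proj_residual:
  assumes "orthonormal E" "finite E" "v \<in> span E"
  shows "orthogonal (h - proj E h) v"
  using assms(3)
  by (rule orthogonal_to_span) (simp add: orthogonal_def inner_diff_left inner_proj_orthonormal[OF assms(1,2)])

lemma sum_inner_square_le_norm_square:
  assumes "orthonormal E" "finite E"
  shows "(\<Sum>e\<in>E. (inner h e)\<^sup>2) \<le> (norm h)\<^sup>2"
proof -
  have "inner h (proj E h) = (\<Sum>e\<in>E. (inner h e)\<^sup>2)"
    unfolding proj_def by (simp add: inner_sum_right power2_eq_square)
  moreover have "inner (proj E h) (proj E h) = inner h (proj E h)"
    using orthogonal_proj_residual[OF assms proj_in_span, of h h]
    by (simp add: orthogonal_def inner_diff_left)
  moreover have "0 \<le> inner (h - proj E h) (h - proj E h)"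
    by simp
  ultimately show ?thesis
    by (simp add: inner_diff_left inner_diff_right inner_commute power2_norm_eq_inner)
qed

lemma orthonormal_spanning_set_exists:
  fixes C :: "'a::real_inner set"
  assumes "finite C"
  obtains E where "finite E" "card E \<le> card C" "orthonormal E" "C \<subseteq> span E"
proof -
  have "\<exists>E. finite E \<and> card E \<le> card C \<and> orthonormal E \<and> C \<subseteq> span E"
    using assms
  proof (induction C rule: finite_induct)
    case empty
    show ?case
      by (rule exI[of _ "{}"]) (simp add: orthonormal_def)
  next
    case (insert a C)
    then obtain E where E: "finite E" "card E \<le> card C" "orthonormal E" "C \<subseteq> span E"
      by blast
    define r where "r = a - proj E a"
    have a_eq: "a = r + proj E a"
      by (simp add: r_def)
    show ?case
    proof (cases "r = 0")
      case True
      then show ?thesis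
        using E insert.hyps a_eq proj_in_span[of E a] by (intro exI[of _ E]) auto
    next
      case False
      define e where "e = r /\<^sub>R norm r"
      have e_norm: "norm e = 1"
        using False by (simp add: e_def)
      have e_orth: "orthogonal e e'" if "e' \<in> E" for e'
        using orthogonal_proj_residual[OF E(3,1) span_base[OF that], of a]
        by (simp add: e_def r_def orthogonal_clauses)
      then have "e \<notin> E"
        using e_norm by (metis orthogonal_self norm_zero zero_neq_one)
      have "orthonormal (insert e E)"
        using E(3) e_norm e_orth
        by (auto simp: orthonormal_def pairwise_insert orthogonal_commute)
      moreover have "a \<in> span (insert e E)"
      proof -
        have "r = norm r *\<^sub>R e"
          using False by (simp add: e_def)
        then show ?thesis
          using a_eq proj_in_span[of E a]
          by (metis span_add span_base span_mono span_scale insertI1 subset_insertI subsetD)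
      qed
      moreover have "C \<subseteq> span (insert e E)"
        using E(4) span_mono[of E "insert e E"] by auto
      moreover have "card (insert e E) \<le> card (insert a C)"
        using E(1,2) \<open>e \<notin> E\<close> insert.hyps by simp
      ultimately show ?thesis
        using E(1) by (intro exI[of _ "insert e E"]) auto
    qed
  qed
  then show ?thesis
    using that by blast
qed

lemma ennreal_Max:
  assumes "finite A" "A \<noteq> {}"
  shows "ennreal (Max (f ` A)) = (SUP a\<in>A. ennreal (f a))"
  using assms mono_Max_commute[of ennreal "f ` A"] cSup_eq_Max[of "ennreal ` f ` A"]
  by (simp add: mono_def ennreal_leI image_image)

lemma Max_abs_nonneg:
  fixes f :: "'a \<Rightarrow> real"
  assumes "finite A" "A \<noteq> {}"
  shows "0 \<le> Max ((\<lambda>a. \<bar>f a\<bar>) ` A)"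
  using assms by (subst Max_ge_iff) auto

lemma finite_subset_convex_hull_cover:
  assumes "finite Y" "Y \<subseteq> convex hull F"
  obtains F0 where "finite F0" "F0 \<subseteq> F" "Y \<subseteq> convex hull F0"
proof -
  have "\<exists>F0. finite F0 \<and> F0 \<subseteq> F \<and> Y \<subseteq> convex hull F0"
    using assms
  proof (induction Y rule: finite_induct)
    case (insert y Y)
    then obtain F0 where F0: "finite F0" "F0 \<subseteq> F" "Y \<subseteq> convex hull F0"
      by auto
    obtain S where S: "finite S" "S \<subseteq> F" "y \<in> convex hull S"
      using insert.prems convex_hull_finite by (fastforce simp: convex_hull_explicit)
    have "convex hull F0 \<subseteq> convex hull (F0 \<union> S)" "convex hull S \<subseteq> convex hull (F0 \<union> S)"
      by (simp_all add: hull_mono)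
    then have "insert y Y \<subseteq> convex hull (F0 \<union> S)"
      using F0(3) S(3) by auto
    then show ?case
      using F0 S by (intro exI[of _ "F0 \<union> S"]) auto
  qed (auto intro: exI[of _ "{}"])
  then show ?thesis
    using that by blast
qed

lemma covering_number_attained:
  assumes "covering_number A \<epsilon> \<noteq> \<infinity>"
  obtains C where "finite C" "C \<subseteq> A" "A \<subseteq> (\<Union>c\<in>C. cball c \<epsilon>)" "covering_number A \<epsilon> = of_nat (card C)"
proof -
  define K where "K = {C. finite C \<and> C \<subseteq> A \<and> A \<subseteq> (\<Union>c\<in>C. cball c \<epsilon>)}"
  have "K \<noteq> {}"
    using assms by (auto simp: covering_number_def K_def top_ennreal.rep_eq)
  then obtain C where C: "C \<in> K" "\<And>C'. C' \<in> K \<Longrightarrow> card C \<le> card C'"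
    using ex_has_least_nat[of "\<lambda>C. C \<in> K" _ card] by blast
  have "covering_number A \<epsilon> = of_nat (card C)"
    unfolding covering_number_def K_def[symmetric]
    using C by (intro antisym INF_lower INF_greatest) auto
  with C(1) show ?thesis
    using that by (auto simp: K_def)
qed

lemma modulus_zero_radius: "modulus M W A 0 = 0"
  unfolding modulus_def
proof (intro antisym SUP_least)
  fix S assume "S \<in> {S. finite S \<and> S \<subseteq> {(f, g). f \<in> A \<and> g \<in> A \<and> norm (f - g) \<le> 0}}"
  then have "(SUP p\<in>S. ennreal \<bar>W (fst p) x - W (snd p) x\<bar>) = 0" for x
    by (intro antisym SUP_least) auto
  then show "(\<integral>\<^sup>+x. (SUP p\<in>S. ennreal \<bar>W (fst p) x - W (snd p) x\<bar>) \<partial>M) \<le> 0"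
    by simp
qed simp

locale isonormal_process = prob_space M for M :: "'a measure" +
  fixes W :: "'h::real_inner \<Rightarrow> 'a \<Rightarrow> real"
  assumes isonormal: "isonormal M W"
begin

lemma centered_gaussian_W: "centered_gaussian M (W h)"
  using isonormal[unfolded isonormal_def, THEN conjunct1, rule_format, where n=1 and c="\<lambda>_. 1" and h="\<lambda>_. h"]
  by simp

lemma measurable_W [measurable]: "W h \<in> borel_measurable M"
  using centered_gaussian_W unfolding centered_gaussian_def by blast

lemma integral_W_mult: "(LINT x|M. W g x * W h x) = inner g h"
  using isonormal unfolding isonormal_def by blast

lemma integral_W_square: "(LINT x|M. (W h x)\<^sup>2) = (norm h)\<^sup>2"
  unfolding power2_norm_eq_inner using integral_W_mult[of h h] by (simp add: power2_eq_square)

lemma W_law: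
  "(h = 0 \<and> (AE x in M. W h x = 0)) \<or> (h \<noteq> 0 \<and> distributed M lborel (W h) (normal_density 0 (norm h)))"
proof -
  have "(AE x in M. W h x = 0) \<or> (\<exists>\<sigma>>0. distributed M lborel (W h) (normal_density 0 \<sigma>))"
    using centered_gaussian_W unfolding centered_gaussian_def by blast
  then show ?thesis
  proof
    assume W_zero: "AE x in M. W h x = 0"
    then have "(LINT x|M. (W h x)\<^sup>2) = 0"
      by (intro integral_eq_zero_AE) auto
    then show ?thesis
      using W_zero by (simp add: integral_W_square)
  next
    assume "\<exists>\<sigma>>0. distributed M lborel (W h) (normal_density 0 \<sigma>)"
    then obtain \<sigma> where \<sigma>: "\<sigma> > 0" "distributed M lborel (W h) (normal_density 0 \<sigma>)"
      by blast
    have "(norm h)\<^sup>2 = \<sigma>\<^sup>2"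
      using normal_distributed_expectation[OF \<sigma>] normal_distributed_variance[OF \<sigma>]
      by (simp add: integral_W_square)
    then have "norm h = \<sigma>"
      using \<sigma>(1) by (simp add: power2_eq_iff_nonneg)
    then show ?thesis
      using \<sigma> by auto
  qed
qed

lemma integrable_W_square: "integrable M (\<lambda>x. (W h x)\<^sup>2)"
  using W_law[of h]
proof
  assume "h = 0 \<and> (AE x in M. W h x = 0)"
  then show ?thesis
    by (subst integrable_cong_AE[where g="\<lambda>_. 0"]) auto
next
  assume "h \<noteq> 0 \<and> distributed M lborel (W h) (normal_density 0 (norm h))"
  moreover have "integrable lborel (\<lambda>x. normal_density 0 (norm h) x * x\<^sup>2)" if "h \<noteq> 0"
    using integrable_normal_moment[of "norm h" 0 2] that by simp
  ultimately show ?thesis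
    using distributed_integrable[of M lborel "W h" _ "\<lambda>x. x\<^sup>2"] by auto
qed

lemma integrable_W_mult: "integrable M (\<lambda>x. W g x * W h x)"
proof (rule Bochner_Integration.integrable_bound)
  show "integrable M (\<lambda>x. (W g x)\<^sup>2 + (W h x)\<^sup>2)"
    using integrable_W_square[of g] integrable_W_square[of h] by simp
  show "AE x in M. norm (W g x * W h x) \<le> norm ((W g x)\<^sup>2 + (W h x)\<^sup>2)"
  proof (intro AE_I2)
    fix x
    have "2 * (\<bar>W g x\<bar> * \<bar>W h x\<bar>) \<le> (W g x)\<^sup>2 + (W h x)\<^sup>2"
      using sum_squares_bound[of "\<bar>W g x\<bar>" "\<bar>W h x\<bar>"] by (simp add: power2_abs)
    then have "\<bar>W g x\<bar> * \<bar>W h x\<bar> \<le> (W g x)\<^sup>2 + (W h x)\<^sup>2"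
      using zero_le_mult_iff[of "\<bar>W g x\<bar>" "\<bar>W h x\<bar>"] by linarith
    then show "norm (W g x * W h x) \<le> norm ((W g x)\<^sup>2 + (W h x)\<^sup>2)"
      by (simp add: abs_mult)
  qed
qed simp

text \<open>The linearity of W holds only almost surely: the residual has second moment zero.\<close>

lemma W_sum:
  assumes "finite I"
  shows "AE x in M. W (\<Sum>i\<in>I. c i *\<^sub>R h i) x = (\<Sum>i\<in>I. c i * W (h i) x)"
proof -
  define v where "v = (\<Sum>i\<in>I. c i *\<^sub>R h i)"
  define D where "D x = W v x - (\<Sum>i\<in>I. c i * W (h i) x)" for x
  have D_square: "(D x)\<^sup>2 = W v x * W v x - 2 * (\<Sum>i\<in>I. c i * (W v x * W (h i) x))
      + (\<Sum>i\<in>I. \<Sum>j\<in>I. c i * c j * (W (h i) x * W (h j) x))" for x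
    unfolding D_def power2_eq_square
    by (simp add: algebra_simps sum_distrib_left sum_distrib_right sum_subtractf)
  have integrable: "integrable M (\<lambda>x. W v x * W v x)" "integrable M (\<lambda>x. c i * (W v x * W (h i) x))"
    "integrable M (\<lambda>x. c i * c j * (W (h i) x * W (h j) x))" for i j
    using integrable_W_mult by auto
  have "inner v v = (\<Sum>i\<in>I. c i * inner v (h i))"
    by (subst (2) v_def) (simp add: inner_sum_right)
  moreover have "inner v v = (\<Sum>i\<in>I. \<Sum>j\<in>I. c i * c j * inner (h i) (h j))"
    unfolding v_def
    by (simp add: inner_sum_left inner_sum_right sum_distrib_left mult.assoc inner_commute mult.left_commute)
  ultimately have "(LINT x|M. (D x)\<^sup>2) = 0"
    unfolding D_square using integrable
    by (simp add: Bochner_Integration.integral_diff Bochner_Integration.integral_add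
        integral_sum integrable_sum integral_W_mult)
  moreover have "integrable M (\<lambda>x. (D x)\<^sup>2)"
    unfolding D_square using integrable by simp
  ultimately have "AE x in M. (D x)\<^sup>2 = 0"
    by (simp add: integral_nonneg_eq_0_iff_AE)
  then show ?thesis
    unfolding D_def v_def by auto
qed

lemma W_add: "AE x in M. W (g + h) x = W g x + W h x"
  using W_sum[of "{0::nat, 1}" "\<lambda>_. 1" "\<lambda>i. if i = 0 then g else h"] by simp

lemma W_diff: "AE x in M. W (g - h) x = W g x - W h x"
  using W_sum[of "{0::nat, 1}" "\<lambda>i. if i = 0 then 1 else -1" "\<lambda>i. if i = 0 then g else h"] by simp

lemma distr_W_eq:
  assumes "norm g = norm h"
  shows "distr M lborel (W g) = distr M lborel (W h)"
  using W_law[of g] W_law[of h]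
proof (elim disjE conjE)
  assume "AE x in M. W g x = 0" "AE x in M. W h x = 0"
  then have "AE x in M. W g x = W h x"
    by eventually_elim simp
  then show ?thesis
    by (intro distr_cong_AE) auto
next
  assume "distributed M lborel (W g) (normal_density 0 (norm g))"
    "distributed M lborel (W h) (normal_density 0 (norm h))"
  then show ?thesis
    using assms by (simp add: distributed_def)
qed (use assms in auto)

lemma char_W_sum_eq:
  assumes "finite J" and norm_eq: "norm (\<Sum>j\<in>J. t j *\<^sub>R c j) = norm (\<Sum>j\<in>J. t j *\<^sub>R d j)"
  shows "(CLINT x|M. iexp (\<Sum>j\<in>J. t j * W (c j) x)) = (CLINT x|M. iexp (\<Sum>j\<in>J. t j * W (d j) x))"
proof -
  have "(CLINT x|M. iexp (\<Sum>j\<in>J. t j * W (e j) x)) = (CLINT y|distr M lborel (W (\<Sum>j\<in>J. t j *\<^sub>R e j)). iexp y)"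
    for e
  proof -
    have "(CLINT x|M. iexp (\<Sum>j\<in>J. t j * W (e j) x)) = (CLINT x|M. iexp (W (\<Sum>j\<in>J. t j *\<^sub>R e j) x))"
      using W_sum[OF \<open>finite J\<close>, of t e] by (intro integral_cong_AE) auto
    then show ?thesis
      by (simp add: integral_distr)
  qed
  then show ?thesis
    using distr_W_eq[OF norm_eq] by simp
qed

lemma nn_integral_Max_abs_W_eq:
  fixes c d :: "'i \<Rightarrow> 'h"
  assumes "finite J"
    and isometric: "\<And>t. norm (\<Sum>j\<in>J. t j *\<^sub>R c j) = norm (\<Sum>j\<in>J. t j *\<^sub>R d j)"
  shows "(\<integral>\<^sup>+x. ennreal (Max ((\<lambda>j. \<bar>W (c j) x\<bar>) ` J)) \<partial>M)
       = (\<integral>\<^sup>+x. ennreal (Max ((\<lambda>j. \<bar>W (d j) x\<bar>) ` J)) \<partial>M)"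
proof -
  obtain g where g: "bij_betw g {..<card J} J"
    using ex_bij_betw_nat_finite[OF \<open>finite J\<close>] by (auto simp: atLeast0LessThan)
  have "(\<Sum>i<card J. t i *\<^sub>R e (g i)) = (\<Sum>j\<in>J. t (inv_into {..<card J} g j) *\<^sub>R e j)"
    for t and e :: "'i \<Rightarrow> 'h"
    using sum.reindex_bij_betw[OF g, of "\<lambda>j. t (inv_into {..<card J} g j) *\<^sub>R e j"] g
    by (simp add: bij_betw_inv_into_left)
  then have "(CLINT x|M. iexp (\<Sum>i<card J. t i * W (c (g i)) x))
      = (CLINT x|M. iexp (\<Sum>i<card J. t i * W (d (g i)) x))" for t
    using char_W_sum_eq[of "{..<card J}" t "\<lambda>i. c (g i)" "\<lambda>i. d (g i)"] isometric by simp
  moreover have "(\<lambda>j. f j) ` J = (\<lambda>i. f (g i)) ` {..<card J}" for f :: "'i \<Rightarrow> real"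
    using g by (metis bij_betw_imp_surj_on image_image)
  ultimately show ?thesis
    using nn_integral_Max_abs_eq_if_char_eq[of "\<lambda>i. W (c (g i))" "\<lambda>i. W (d (g i))" "card J"] by simp
qed

lemma nn_integral_Max_abs_W_le_orthogonal_add:
  fixes a b :: "'i \<Rightarrow> 'h"
  assumes "finite J" "J \<noteq> {}" and orth: "\<And>i j. i \<in> J \<Longrightarrow> j \<in> J \<Longrightarrow> orthogonal (a i) (b j)"
  shows "(\<integral>\<^sup>+x. ennreal (Max ((\<lambda>j. \<bar>W (a j) x\<bar>) ` J)) \<partial>M)
       \<le> (\<integral>\<^sup>+x. ennreal (Max ((\<lambda>j. \<bar>W (a j + b j) x\<bar>) ` J)) \<partial>M)"
proof -
  \<comment> \<open>\<open>a + b\<close> and \<open>a - b\<close> are isometric families, hence equal in joint law,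
    and \<open>W (a j)\<close> is the average of \<open>W (a j + b j)\<close> and \<open>W (a j - b j)\<close>.\<close>
  have isometric: "norm (\<Sum>j\<in>J. t j *\<^sub>R (a j + b j)) = norm (\<Sum>j\<in>J. t j *\<^sub>R (a j - b j))" for t
    using norm_sum_scaleR_add_eq_norm_sum_scaleR_diff[OF assms(1) orth] .
  have "AE x in M. \<forall>j\<in>J. W (a j + b j) x = W (a j) x + W (b j) x \<and> W (a j - b j) x = W (a j) x - W (b j) x"
    using W_add W_diff by (intro AE_finite_allI[OF \<open>finite J\<close>]) auto
  then have "AE x in M. 2 * ennreal (Max ((\<lambda>j. \<bar>W (a j) x\<bar>) ` J))
      \<le> ennreal (Max ((\<lambda>j. \<bar>W (a j + b j) x\<bar>) ` J)) + ennreal (Max ((\<lambda>j. \<bar>W (a j - b j) x\<bar>) ` J))"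
  proof eventually_elim
    case (elim x)
    have "Max ((\<lambda>j. \<bar>W (a j) x\<bar>) ` J) \<in> (\<lambda>j. \<bar>W (a j) x\<bar>) ` J"
      using assms(1,2) by (intro Max_in) auto
    then obtain j where j: "j \<in> J" "Max ((\<lambda>j. \<bar>W (a j) x\<bar>) ` J) = \<bar>W (a j) x\<bar>"
      by auto
    have "2 * \<bar>W (a j) x\<bar> \<le> \<bar>W (a j + b j) x\<bar> + \<bar>W (a j - b j) x\<bar>"
      using elim j(1) by (simp add: abs_triangle_ineq[of "W (a j) x + W (b j) x" "W (a j) x - W (b j) x", simplified])
    also have "\<dots> \<le> Max ((\<lambda>j. \<bar>W (a j + b j) x\<bar>) ` J) + Max ((\<lambda>j. \<bar>W (a j - b j) x\<bar>) ` J)"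
      using \<open>finite J\<close> j(1) by (intro add_mono Max_ge) auto
    finally have "2 * Max ((\<lambda>j. \<bar>W (a j) x\<bar>) ` J)
        \<le> Max ((\<lambda>j. \<bar>W (a j + b j) x\<bar>) ` J) + Max ((\<lambda>j. \<bar>W (a j - b j) x\<bar>) ` J)"
      unfolding j(2) .
    then have "ennreal (2 * Max ((\<lambda>j. \<bar>W (a j) x\<bar>) ` J))
        \<le> ennreal (Max ((\<lambda>j. \<bar>W (a j + b j) x\<bar>) ` J) + Max ((\<lambda>j. \<bar>W (a j - b j) x\<bar>) ` J))"
      by (rule ennreal_leI)
    then show ?case
      using Max_abs_nonneg[OF assms(1,2)] by (simp add: ennreal_mult')
  qed
  then have "2 * (\<integral>\<^sup>+x. ennreal (Max ((\<lambda>j. \<bar>W (a j) x\<bar>) ` J)) \<partial>M)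
      \<le> (\<integral>\<^sup>+x. ennreal (Max ((\<lambda>j. \<bar>W (a j + b j) x\<bar>) ` J)) \<partial>M)
        + (\<integral>\<^sup>+x. ennreal (Max ((\<lambda>j. \<bar>W (a j - b j) x\<bar>) ` J)) \<partial>M)"
    using \<open>finite J\<close>
    by (subst nn_integral_add[symmetric]) (auto simp flip: nn_integral_cmult intro!: nn_integral_mono_AE)
  also have "\<dots> = 2 * (\<integral>\<^sup>+x. ennreal (Max ((\<lambda>j. \<bar>W (a j + b j) x\<bar>) ` J)) \<partial>M)"
    using nn_integral_Max_abs_W_eq[OF \<open>finite J\<close> isometric] by (simp add: mult_2)
  finally show ?thesis
    by (simp add: ennreal_mult_le_mult_iff)
qed

lemma nn_integral_sqrt_sum_W_square_le:
  assumes "finite E" "orthonormal E"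
  shows "(\<integral>\<^sup>+x. ennreal (sqrt (\<Sum>e\<in>E. (W e x)\<^sup>2)) \<partial>M) \<le> ennreal (sqrt (card E))"
proof (cases "E = {}")
  case False
  define a where "a = sqrt (card E)"
  have "a > 0"
    using False \<open>finite E\<close> by (simp add: a_def card_gt_0_iff)
  \<comment> \<open>AM-GM; the right-hand side has expectation \<open>a\<close>.\<close>
  have sqrt_le: "sqrt y \<le> y / (2 * a) + a / 2" if "y \<ge> 0" for y
  proof -
    have "2 * a * sqrt y \<le> y + a * a"
      using sum_squares_bound[of a "sqrt y"] that by (simp add: power2_eq_square algebra_simps)
    then show ?thesis
      using \<open>a > 0\<close> by (simp add: field_simps)
  qed
  have "(LINT x|M. (\<Sum>e\<in>E. (W e x)\<^sup>2)) = (\<Sum>e\<in>E. (norm e)\<^sup>2)"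
    using integrable_W_square by (simp add: integral_sum integral_W_square)
  also have "\<dots> = a * a"
    using \<open>orthonormal E\<close> by (simp add: a_def orthonormal_def)
  finally have integral_sum_squares: "(LINT x|M. (\<Sum>e\<in>E. (W e x)\<^sup>2)) = a * a" .
  have "(\<integral>\<^sup>+x. ennreal (sqrt (\<Sum>e\<in>E. (W e x)\<^sup>2)) \<partial>M)
      \<le> (\<integral>\<^sup>+x. ennreal ((\<Sum>e\<in>E. (W e x)\<^sup>2) / (2 * a) + a / 2) \<partial>M)"
    by (intro nn_integral_mono ennreal_leI sqrt_le) (simp add: sum_nonneg)
  also have "\<dots> = ennreal (LINT x|M. (\<Sum>e\<in>E. (W e x)\<^sup>2) / (2 * a) + a / 2)"
    using integrable_W_square \<open>a > 0\<close>
    by (intro nn_integral_eq_integral) (auto intro!: add_nonneg_nonneg divide_nonneg_pos sum_nonneg)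
  also have "(LINT x|M. (\<Sum>e\<in>E. (W e x)\<^sup>2) / (2 * a) + a / 2) = a"
    using integrable_W_square integral_sum_squares \<open>a > 0\<close> by (simp add: prob_space field_simps)
  finally show ?thesis
    by (simp add: a_def)
qed simp

lemma nn_integral_Max_abs_W_diff_le_modulus:
  assumes "finite J" "J \<noteq> {}"
    and pairs: "\<And>j. j \<in> J \<Longrightarrow> f j \<in> A \<and> g j \<in> A \<and> norm (f j - g j) \<le> \<delta>"
  shows "(\<integral>\<^sup>+x. ennreal (Max ((\<lambda>j. \<bar>W (f j - g j) x\<bar>) ` J)) \<partial>M) \<le> modulus M W A \<delta>"
proof -
  define S where "S = (\<lambda>j. (f j, g j)) ` J"
  have "AE x in M. \<forall>j\<in>J. W (f j - g j) x = W (f j) x - W (g j) x"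
    using W_diff by (intro AE_finite_allI[OF \<open>finite J\<close>]) auto
  then have "(\<integral>\<^sup>+x. ennreal (Max ((\<lambda>j. \<bar>W (f j - g j) x\<bar>) ` J)) \<partial>M)
      = (\<integral>\<^sup>+x. (SUP p\<in>S. ennreal \<bar>W (fst p) x - W (snd p) x\<bar>) \<partial>M)"
    by (intro nn_integral_cong_AE, eventually_elim)
      (simp add: ennreal_Max[OF assms(1,2)] S_def image_image)
  also have "\<dots> \<le> modulus M W A \<delta>"
    unfolding modulus_def using \<open>finite J\<close> pairs by (intro SUP_upper) (auto simp: S_def)
  finally show ?thesis .
qed

lemma AE_abs_W_le_Max_of_convex_hull:
  assumes "finite F" "y \<in> convex hull F"
  shows "AE x in M. \<bar>W y x\<bar> \<le> Max ((\<lambda>z. \<bar>W z x\<bar>) ` F)"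
proof -
  obtain u where u: "\<forall>z\<in>F. 0 \<le> u z" "sum u F = 1" "(\<Sum>z\<in>F. u z *\<^sub>R z) = y"
    using assms convex_hull_finite by blast
  then have "F \<noteq> {}"
    by auto
  from W_sum[OF \<open>finite F\<close>, of u id] show ?thesis
  proof eventually_elim
    case (elim x)
    have "\<bar>W y x\<bar> \<le> (\<Sum>z\<in>F. u z * \<bar>W z x\<bar>)"
      using elim u by (auto intro: order.trans[OF sum_abs] simp: abs_mult)
    also have "\<dots> \<le> (\<Sum>z\<in>F. u z * Max ((\<lambda>z. \<bar>W z x\<bar>) ` F))"
      using u(1) \<open>finite F\<close> by (intro sum_mono mult_left_mono Max_ge) auto
    also have "\<dots> = Max ((\<lambda>z. \<bar>W z x\<bar>) ` F)"
      using u(2) by (simp flip: sum_distrib_right)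
    finally show ?case .
  qed
qed

lemma AE_abs_W_proj_le:
  assumes "finite E" "orthonormal E"
  shows "AE x in M. \<bar>W (proj E v) x\<bar> \<le> norm v * sqrt (\<Sum>e\<in>E. (W e x)\<^sup>2)"
  using W_sum[OF \<open>finite E\<close>, of "\<lambda>e. inner v e" id]
proof eventually_elim
  case (elim x)
  have "\<bar>W (proj E v) x\<bar> \<le> (\<Sum>e\<in>E. \<bar>inner v e\<bar> * \<bar>W e x\<bar>)"
    using elim by (auto simp: proj_def abs_mult intro: order.trans[OF sum_abs])
  also have "\<dots> \<le> L2_set (\<lambda>e. inner v e) E * L2_set (\<lambda>e. W e x) E"
    by (rule L2_set_mult_ineq)
  also have "\<dots> \<le> norm v * sqrt (\<Sum>e\<in>E. (W e x)\<^sup>2)"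
    using sum_inner_square_le_norm_square[OF assms(2,1), of v]
    by (auto simp: L2_set_def sum_nonneg intro!: mult_right_mono real_le_lsqrt)
  finally show ?case .
qed

lemma AE_abs_W_diff_le:
  assumes "finite E" "orthonormal E" "finite F" "f \<in> convex hull F" "g \<in> convex hull F"
  shows "AE x in M. \<bar>W f x - W g x\<bar>
    \<le> 2 * Max ((\<lambda>z. \<bar>W (z - proj E z) x\<bar>) ` F) + norm (f - g) * sqrt (\<Sum>e\<in>E. (W e x)\<^sup>2)"
proof -
  have residual_linear: "linear (\<lambda>z. z - proj E z)"
    using linear_proj by (intro linear_compose_sub linear_ident)
  have residual_hull: "y - proj E y \<in> convex hull ((\<lambda>z. z - proj E z) ` F)"
    if "y \<in> convex hull F" for y
    using that by (subst convex_hull_linear_image[OF residual_linear, symmetric]) auto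
  then have residual_bound: "AE x in M. \<bar>W (y - proj E y) x\<bar> \<le> Max ((\<lambda>z. \<bar>W (z - proj E z) x\<bar>) ` F)"
    if "y \<in> convex hull F" for y
    using AE_abs_W_le_Max_of_convex_hull[OF finite_imageI[OF \<open>finite F\<close>] residual_hull[OF that]]
    by (simp add: image_image)
  have proj_diff: "proj E (f - g) = proj E f - proj E g"
    using linear_proj by (rule linear_diff)
  show ?thesis
    using residual_bound[OF assms(4)] residual_bound[OF assms(5)]
      AE_abs_W_proj_le[OF assms(1,2), of "f - g", unfolded proj_diff]
      W_add[of "f - proj E f" "proj E f"] W_add[of "g - proj E g" "proj E g"]
      W_diff[of "proj E f" "proj E g"]
    by eventually_elim auto
qed

lemma nn_integral_Max_abs_W_residual_le_modulus:
  assumes "finite E" "orthonormal E" "finite F0" "F0 \<noteq> {}" "F0 \<subseteq> A"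
    and center: "\<And>z. z \<in> F0 \<Longrightarrow> center z \<in> A \<inter> span E \<and> norm (z - center z) \<le> \<epsilon>"
  shows "(\<integral>\<^sup>+x. ennreal (Max ((\<lambda>z. \<bar>W (z - proj E z) x\<bar>) ` F0)) \<partial>M) \<le> modulus M W A \<epsilon>"
proof -
  have "orthogonal (z - proj E z) (proj E z' - center z')" if "z' \<in> F0" for z z'
    using center[OF that] by (intro orthogonal_proj_residual[OF assms(2,1)] span_diff proj_in_span) auto
  then have "(\<integral>\<^sup>+x. ennreal (Max ((\<lambda>z. \<bar>W (z - proj E z) x\<bar>) ` F0)) \<partial>M)
      \<le> (\<integral>\<^sup>+x. ennreal (Max ((\<lambda>z. \<bar>W ((z - proj E z) + (proj E z - center z)) x\<bar>) ` F0)) \<partial>M)"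
    by (intro nn_integral_Max_abs_W_le_orthogonal_add assms(3,4))
  also have "\<dots> \<le> modulus M W A \<epsilon>"
    using nn_integral_Max_abs_W_diff_le_modulus[where J=F0 and f="\<lambda>z. z" and g=center and A=A]
      center assms(3-5) by auto
  finally show ?thesis .
qed

lemma nn_integral_SUP_abs_W_diff_le:
  assumes "finite E" "orthonormal E" "finite F0" "F0 \<noteq> {}" "finite S" "\<delta> \<ge> 0"
    and S: "\<And>p. p \<in> S \<Longrightarrow> fst p \<in> convex hull F0 \<and> snd p \<in> convex hull F0 \<and> norm (fst p - snd p) \<le> \<delta>"
  shows "(\<integral>\<^sup>+x. (SUP p\<in>S. ennreal \<bar>W (fst p) x - W (snd p) x\<bar>) \<partial>M)
    \<le> 2 * (\<integral>\<^sup>+x. ennreal (Max ((\<lambda>z. \<bar>W (z - proj E z) x\<bar>) ` F0)) \<partial>M)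
      + ennreal \<delta> * (\<integral>\<^sup>+x. ennreal (sqrt (\<Sum>e\<in>E. (W e x)\<^sup>2)) \<partial>M)"
proof -
  let ?Q = "\<lambda>x. Max ((\<lambda>z. \<bar>W (z - proj E z) x\<bar>) ` F0)"
  let ?R = "\<lambda>x. sqrt (\<Sum>e\<in>E. (W e x)\<^sup>2)"
  have "AE x in M. \<forall>p\<in>S. \<bar>W (fst p) x - W (snd p) x\<bar> \<le> 2 * ?Q x + norm (fst p - snd p) * ?R x"
  proof (rule AE_finite_allI[OF \<open>finite S\<close>])
    fix p assume "p \<in> S"
    then have "fst p \<in> convex hull F0" "snd p \<in> convex hull F0"
      using S by auto
    then show "AE x in M. \<bar>W (fst p) x - W (snd p) x\<bar> \<le> 2 * ?Q x + norm (fst p - snd p) * ?R x"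
      by (rule AE_abs_W_diff_le[OF assms(1-3)])
  qed
  then have "AE x in M. (SUP p\<in>S. ennreal \<bar>W (fst p) x - W (snd p) x\<bar>)
      \<le> 2 * ennreal (?Q x) + ennreal \<delta> * ennreal (?R x)"
  proof eventually_elim
    case (elim x)
    have nonneg: "0 \<le> ?Q x" "0 \<le> ?R x"
      using Max_abs_nonneg[OF assms(3,4)] by (simp_all add: sum_nonneg)
    have "\<bar>W (fst p) x - W (snd p) x\<bar> \<le> 2 * ?Q x + \<delta> * ?R x" if "p \<in> S" for p
    proof -
      have "norm (fst p - snd p) * ?R x \<le> \<delta> * ?R x"
        using S[OF that] nonneg(2) by (intro mult_right_mono) auto
      then show ?thesis
        using elim that by fastforce
    qed
    then have "(SUP p\<in>S. ennreal \<bar>W (fst p) x - W (snd p) x\<bar>) \<le> ennreal (2 * ?Q x + \<delta> * ?R x)"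
      by (intro SUP_least ennreal_leI)
    also have "\<dots> = 2 * ennreal (?Q x) + ennreal \<delta> * ennreal (?R x)"
      using nonneg \<open>\<delta> \<ge> 0\<close> by (simp add: ennreal_mult)
    finally show ?case .
  qed
  then have "(\<integral>\<^sup>+x. (SUP p\<in>S. ennreal \<bar>W (fst p) x - W (snd p) x\<bar>) \<partial>M)
      \<le> (\<integral>\<^sup>+x. 2 * ennreal (?Q x) + ennreal \<delta> * ennreal (?R x) \<partial>M)"
    by (rule nn_integral_mono_AE)
  also have "\<dots> = 2 * (\<integral>\<^sup>+x. ennreal (?Q x) \<partial>M) + ennreal \<delta> * (\<integral>\<^sup>+x. ennreal (?R x) \<partial>M)"
    using \<open>finite F0\<close> by (simp add: nn_integral_add nn_integral_cmult)
  finally show ?thesis .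
qed

lemma modulus_convex_hull_le:
  assumes "\<delta> \<ge> 0" "finite C" "C \<subseteq> F" "F \<subseteq> (\<Union>c\<in>C. cball c \<epsilon>)"
  shows "modulus M W (convex hull F) \<delta> \<le> 2 * modulus M W F \<epsilon> + ennreal \<delta> * ennreal (sqrt (card C))"
proof -
  obtain E where E: "finite E" "card E \<le> card C" "orthonormal E" "C \<subseteq> span E"
    using orthonormal_spanning_set_exists[OF \<open>finite C\<close>] .
  have "\<forall>z\<in>F. \<exists>c. c \<in> C \<and> norm (z - c) \<le> \<epsilon>"
    using assms(4) by (force simp: dist_norm norm_minus_commute)
  then obtain center where center: "\<And>z. z \<in> F \<Longrightarrow> center z \<in> C \<and> norm (z - center z) \<le> \<epsilon>"
    using bchoice[OF \<open>\<forall>z\<in>F. \<exists>c. c \<in> C \<and> norm (z - c) \<le> \<epsilon>\<close>] by blast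
  have R_bound: "(\<integral>\<^sup>+x. ennreal (sqrt (\<Sum>e\<in>E. (W e x)\<^sup>2)) \<partial>M) \<le> ennreal (sqrt (card C))"
    using nn_integral_sqrt_sum_W_square_le[OF E(1,3)] E(2) by (auto intro: order_trans ennreal_leI)
  show ?thesis
    unfolding modulus_def[of M W "convex hull F"]
  proof (rule SUP_least, clarify)
    fix S assume S: "finite S" "S \<subseteq> {(f, g). f \<in> convex hull F \<and> g \<in> convex hull F \<and> norm (f - g) \<le> \<delta>}"
    show "(\<integral>\<^sup>+x. (SUP p\<in>S. ennreal \<bar>W (fst p) x - W (snd p) x\<bar>) \<partial>M)
        \<le> 2 * modulus M W F \<epsilon> + ennreal \<delta> * ennreal (sqrt (card C))"
    proof (cases "S = {}")
      case False
      have "finite (fst ` S \<union> snd ` S)" "fst ` S \<union> snd ` S \<subseteq> convex hull F"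
        using S by auto
      then obtain F0 where F0: "finite F0" "F0 \<subseteq> F" "fst ` S \<union> snd ` S \<subseteq> convex hull F0"
        by (rule finite_subset_convex_hull_cover)
      then have "F0 \<noteq> {}"
        using False by auto
      have "(\<integral>\<^sup>+x. (SUP p\<in>S. ennreal \<bar>W (fst p) x - W (snd p) x\<bar>) \<partial>M)
          \<le> 2 * (\<integral>\<^sup>+x. ennreal (Max ((\<lambda>z. \<bar>W (z - proj E z) x\<bar>) ` F0)) \<partial>M)
            + ennreal \<delta> * (\<integral>\<^sup>+x. ennreal (sqrt (\<Sum>e\<in>E. (W e x)\<^sup>2)) \<partial>M)"
        using S(2) F0(3) by (intro nn_integral_SUP_abs_W_diff_le[OF E(1,3) F0(1) \<open>F0 \<noteq> {}\<close> S(1) \<open>\<delta> \<ge> 0\<close>]) auto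
      also have "\<dots> \<le> 2 * modulus M W F \<epsilon> + ennreal \<delta> * ennreal (sqrt (card C))"
        using nn_integral_Max_abs_W_residual_le_modulus[OF E(1,3) F0(1) \<open>F0 \<noteq> {}\<close> F0(2), of center \<epsilon>]
          center F0(2) assms(3) E(4) R_bound
        by (intro add_mono mult_left_mono) auto
      finally show ?thesis .
    qed (simp add: bot_ennreal)
  qed
qed

end

theorem theorem1:
  fixes M :: "'a measure"
    and W :: "'h::{real_inner, complete_space} \<Rightarrow> 'a \<Rightarrow> real"
    and F :: "'h set"
    and \<delta> :: real
  assumes "prob_space M"
    and "isonormal M W"
    and "\<delta> \<ge> 0"
  shows "modulus M W (convex hull F) \<delta>
           \<le> (INF \<epsilon>\<in>{0<..}. 2 * modulus M W F \<epsilon> + ennreal \<delta> * ennsqrt (covering_number F \<epsilon>))"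
proof (rule INF_greatest)
  interpret isonormal_process M W
    using assms(1,2) by (simp add: isonormal_process_def isonormal_process_axioms_def)
  fix \<epsilon> :: real
  show "modulus M W (convex hull F) \<delta> \<le> 2 * modulus M W F \<epsilon> + ennreal \<delta> * ennsqrt (covering_number F \<epsilon>)"
  proof (cases "covering_number F \<epsilon> = \<infinity>")
    case True
    \<comment> \<open>For \<open>\<delta> = 0\<close> the right-hand side may be finite, since \<open>0 * \<infinity> = 0\<close>.\<close>
    then show ?thesis
      using \<open>\<delta> \<ge> 0\<close> by (cases "\<delta> = 0") (simp_all add: modulus_zero_radius ennsqrt_def ennreal_mult_top)
  next
    case False
    then obtain C where "finite C" "C \<subseteq> F" "F \<subseteq> (\<Union>c\<in>C. cball c \<epsilon>)"
      and "covering_number F \<epsilon> = of_nat (card C)"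
      by (rule covering_number_attained)
    then show ?thesis
      using modulus_convex_hull_le[OF \<open>\<delta> \<ge> 0\<close>] by (simp add: ennsqrt_def)
  qed
qed

end
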